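(* Let $f:\mathbb{R}^N\times(0,T]\to\mathbb{R}^N$ be monotone in the sense that $(f(u,t)-f(v,t),u-v)\le 0$ for all $u,v\in\mathbb{R}^N$ and all $t$. Let $U$ and $V$ be the $\mathrm{mdG}(q)$ solutions of $\dot w=f(w,t)$ on $(0,T]$ with initial data $U(0^-)$ and $V(0^-)$ respectively, computed on the same partitions and with the same local degrees. Then at every synchronized time-level $\bar t$ (for instance $\bar t=T$), $$\|U(\bar t^-)-V(\bar t^-)\|\le \|U(0^-)-V(0^-)\|,$$ where $\|\cdot\|$ is the Euclidean norm and $(\cdot,\cdot)$ the Euclidean inner product.
   Context: Multi-adaptive discontinuous Galerkin method $\mathrm{mdG}(q)$ for $\dot w=f(w,t)$ on $(0,T]$ with $w(0^-)$ given: for each component $i=1,\dots,N$ one chooses a partition $0=t_{i0}<\dots<t_{iM_i}=T$, intervals $I_{ij}=(t_{i,j-1},t_{ij}]$ and degrees $q_{ij}\ge0$. The solution $W$ has $W_i|_{I_{ij}}\in\mathcal{P}^{q_{ij}}(I_{ij})$ (polynomials of degree $\le q_{ij}$; no continuity required across nodes), $W_i(0^-)$ given, and for all $i,j$ $$[W_i]_{i,j-1}\,v(t_{i,j-1}^+)+\int_{I_{ij}}\dot W_i\,v\,dt=\int_{I_{ij}}f_i(W(t),t)\,v\,dt\qquad\forall v\in\mathcal{P}^{q_{ij}}(I_{ij}),$$ where $[W_i]_{ij}=W_i(t_{ij}^+)-W_i(t_{ij}^-)$ and integrals are exact. A synchronized time-level is a time $\bar t\in(0,T]$ that is a partition node $t_{ij}$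 for every component $i$. *)

theory Defs
  imports "HOL-Analysis.Analysis" "HOL-Computational_Algebra.Polynomial"
begin

definition is_partition :: "real \<Rightarrow> nat \<Rightarrow> (nat \<Rightarrow> real) \<Rightarrow> bool" where
  "is_partition T M t \<longleftrightarrow> t 0 = 0 \<and> t M = T \<and> (\<forall>j<M. t j < t (Suc j))"

text \<open>Value of a piecewise polynomial (piece j lives on I_j = (t (j-1), t j], j = 1..M)
  at time s in (0,T].  At a node t k (k \<ge> 1) this is the left limit W(t_k^-).\<close>
definition dg_val :: "nat \<Rightarrow> (nat \<Rightarrow> real) \<Rightarrow> (nat \<Rightarrow> real poly) \<Rightarrow> real \<Rightarrow> real" where
  "dg_val M t P s = poly (P (THE j. 1 \<le> j \<and> j \<le> M \<and> t (j - 1) < s \<and> s \<le> t j)) s"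

definition dg_vec :: "('n \<Rightarrow> nat) \<Rightarrow> ('n \<Rightarrow> nat \<Rightarrow> real) \<Rightarrow> ('n \<Rightarrow> nat \<Rightarrow> real poly)
    \<Rightarrow> real \<Rightarrow> real ^ 'n" where
  "dg_vec M t P s = (\<chi> i. dg_val (M i) (t i) (P i) s)"

definition dg_left :: "real ^ 'n \<Rightarrow> ('n \<Rightarrow> nat \<Rightarrow> real) \<Rightarrow> ('n \<Rightarrow> nat \<Rightarrow> real poly)
    \<Rightarrow> 'n \<Rightarrow> nat \<Rightarrow> real" where
  "dg_left W0 t P i j = (if j = 1 then W0 $ i else poly (P i (j - 1)) (t i (j - 1)))"

definition is_mdG :: "(real ^ 'n \<Rightarrow> real \<Rightarrow> real ^ 'n) \<Rightarrow> ('n \<Rightarrow> nat) \<Rightarrow> ('n \<Rightarrow> nat \<Rightarrow> real)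
    \<Rightarrow> ('n \<Rightarrow> nat \<Rightarrow> nat) \<Rightarrow> real ^ 'n \<Rightarrow> ('n \<Rightarrow> nat \<Rightarrow> real poly) \<Rightarrow> bool" where
  "is_mdG f M t q W0 P \<longleftrightarrow>
     (\<forall>i. \<forall>j \<in> {1..M i}.
        degree (P i j) \<le> q i j \<and>
        (\<forall>v :: real poly. degree v \<le> q i j \<longrightarrow>
           (\<lambda>s. (f (dg_vec M t P s) s) $ i * poly v s) integrable_on {t i (j - 1) .. t i j} \<and>
           (poly (P i j) (t i (j - 1)) - dg_left W0 t P i j) * poly v (t i (j - 1))
             + integral {t i (j - 1) .. t i j} (\<lambda>s. poly (pderiv (P i j)) s * poly v s)
           = integral {t i (j - 1) .. t i j} (\<lambda>s. (f (dg_vec M t P s) s) $ i * poly v s)))"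

end

theory Submission
  imports Defs
begin

text \<open>Testing the dG equations of U and V on an interval of component i with the difference E of
  the two local polynomials gives an energy identity in which the jump at the left end point enters
  as a nonpositive square: E(t_ij^-)^2 - E(t_i,j-1^-)^2 <= 2 \<integral> (f_i(U) - f_i(V)) (U_i - V_i).
  Telescoping along the partition of component i up to the synchronized level and summing over the
  components, the right-hand sides add up to twice the integral of (f(U) - f(V), U - V) over
  [0, t], which is nonpositive by monotonicity. Synchronization is what makes all components
  integrate over the same interval.\<close>

lemma is_partition_less:
  assumes "is_partition T M t" "a < b" "b \<le> M"
  shows "t a < t b"
  by (rule lift_Suc_mono_less_ivl[of "{..<M}"]) (use assms in \<open>auto simp: is_partition_def\<close>)

lemma is_partition_le:
  assumes "is_partition T M t" "a \<le> b" "b \<le> M"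
  shows "t a \<le> t b"
  using is_partition_less[OF assms(1) _ assms(3), of a] assms(2) by (cases "a = b") auto

lemma dg_val_on_piece:
  assumes part: "is_partition T M t" and j: "1 \<le> j" "j \<le> M" and s: "t (j - 1) < s" "s \<le> t j"
  shows "dg_val M t P s = poly (P j) s"
proof -
  have unique: "j' = j" if j': "1 \<le> j'" "j' \<le> M" "t (j' - 1) < s" "s \<le> t j'" for j'
  proof (rule ccontr)
    assume "j' \<noteq> j"
    then consider "j' \<le> j - 1" | "j \<le> j' - 1" by linarith
    then show False
    proof cases
      case 1
      then have "t j' \<le> t (j - 1)" using is_partition_le[OF part] j by simp
      then show False using j' s by simp
    next
      case 2
      then have "t j \<le> t (j' - 1)" using is_partition_le[OF part] j' by simp
      then show False using j' s by simp
    qed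
  qed
  have "(THE j. 1 \<le> j \<and> j \<le> M \<and> t (j - 1) < s \<and> s \<le> t j) = j"
    by (rule the_equality) (use j s in simp, blast intro: unique)
  then show ?thesis unfolding dg_val_def by simp
qed

definition dg_node :: "real ^ 'n \<Rightarrow> ('n \<Rightarrow> nat \<Rightarrow> real) \<Rightarrow> ('n \<Rightarrow> nat \<Rightarrow> real poly)
    \<Rightarrow> 'n \<Rightarrow> nat \<Rightarrow> real" where
  "dg_node W0 t P i k = (if k = 0 then W0 $ i else poly (P i k) (t i k))"

lemma dg_vec_at_node:
  assumes part: "is_partition T (M i) (t i)" and "k \<le> M i" "0 < t i k"
  shows "dg_vec M t P (t i k) $ i = dg_node W t P i k"
proof -
  have "k \<noteq> 0" using assms(3) part unfolding is_partition_def by (metis less_irrefl)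
  then have "1 \<le> k" "t i (k - 1) < t i k"
    using is_partition_less[OF part, of "k - 1" k] assms(2) by auto
  then have "dg_val (M i) (t i) (P i) (t i k) = poly (P i k) (t i k)"
    using dg_val_on_piece[OF part _ assms(2)] by simp
  then show ?thesis using \<open>k \<noteq> 0\<close> by (simp add: dg_vec_def dg_node_def)
qed

definition dG_weak_eq :: "nat \<Rightarrow> real \<Rightarrow> real \<Rightarrow> real \<Rightarrow> (real \<Rightarrow> real) \<Rightarrow> real poly \<Rightarrow> bool" where
  "dG_weak_eq r a b l h p \<longleftrightarrow>
     (\<forall>v :: real poly. degree v \<le> r \<longrightarrow>
        (\<lambda>s. h s * poly v s) integrable_on {a..b} \<and>
        (poly p a - l) * poly v a + integral {a..b} (\<lambda>s. poly (pderiv p) s * poly v s)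
          = integral {a..b} (\<lambda>s. h s * poly v s))"

lemma is_mdG_piece:
  assumes "is_mdG f M t q W0 P" "j < M i"
  shows "degree (P i (Suc j)) \<le> q i (Suc j)"
    and "dG_weak_eq (q i (Suc j)) (t i j) (t i (Suc j)) (dg_node W0 t P i j)
      (\<lambda>s. f (dg_vec M t P s) s $ i) (P i (Suc j))"
proof -
  have "\<forall>j \<in> {1..M i}. degree (P i j) \<le> q i j \<and>
      dG_weak_eq (q i j) (t i (j - 1)) (t i j) (dg_left W0 t P i j)
        (\<lambda>s. f (dg_vec M t P s) s $ i) (P i j)"
    using assms(1) unfolding is_mdG_def dG_weak_eq_def by (rule spec)
  moreover have "Suc j \<in> {1..M i}" using assms(2) by simp
  ultimately have "degree (P i (Suc j)) \<le> q i (Suc j) \<and>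
      dG_weak_eq (q i (Suc j)) (t i (Suc j - 1)) (t i (Suc j)) (dg_left W0 t P i (Suc j))
        (\<lambda>s. f (dg_vec M t P s) s $ i) (P i (Suc j))"
    by (rule bspec)
  moreover have "dg_left W0 t P i (Suc j) = dg_node W0 t P i j"
    by (simp add: dg_left_def dg_node_def)
  ultimately show "degree (P i (Suc j)) \<le> q i (Suc j)"
    and "dG_weak_eq (q i (Suc j)) (t i j) (t i (Suc j)) (dg_node W0 t P i j)
      (\<lambda>s. f (dg_vec M t P s) s $ i) (P i (Suc j))"
    by simp_all
qed

lemma has_integral_pderiv_mult_self:
  fixes p :: "real poly"
  assumes "a \<le> b"
  shows "((\<lambda>s. poly (pderiv p) s * poly p s) has_integral (poly p b ^ 2 - poly p a ^ 2) / 2) {a..b}"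
proof -
  have "((\<lambda>s. poly p s ^ 2 / 2) has_real_derivative poly (pderiv p) x * poly p x) (at x)" for x
    by (rule derivative_eq_intros poly_DERIV refl | simp)+
  then have "((\<lambda>s. poly p s ^ 2 / 2) has_vector_derivative poly (pderiv p) x * poly p x)
      (at x within {a..b})" for x
    by (simp add: has_real_derivative_iff_has_vector_derivative has_vector_derivative_at_within)
  then have "((\<lambda>s. poly (pderiv p) s * poly p s) has_integral
      poly p b ^ 2 / 2 - poly p a ^ 2 / 2) {a..b}"
    using fundamental_theorem_of_calculus[OF assms,
        of "\<lambda>s. poly p s ^ 2 / 2" "\<lambda>s. poly (pderiv p) s * poly p s"]
    by blast
  then show ?thesis by (simp add: diff_divide_distrib)
qed

lemma poly_mult_integrable: "(\<lambda>s. poly p s * poly r s) integrable_on {a..b :: real}"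
  by (intro integrable_continuous_interval continuous_intros)

text \<open>With \<open>E = pU - pV\<close> as test function, the difference of the two equations reads
  \<open>(E(a) - e) E(a) + (E(b)\<^sup>2 - E(a)\<^sup>2)/2 = I\<close>, where \<open>e = lU - lV\<close>; that is,
  \<open>E(b)\<^sup>2 - e\<^sup>2 = 2 I - (E(a) - e)\<^sup>2\<close>.\<close>
lemma dG_weak_eq_energy:
  assumes ab: "a \<le> b"
    and U: "dG_weak_eq r a b lU hU pU" and V: "dG_weak_eq r a b lV hV pV"
    and degU: "degree pU \<le> r" and degV: "degree pV \<le> r"
  obtains I where "((\<lambda>s. (hU s - hV s) * poly (pU - pV) s) has_integral I) {a..b}"
    and "poly (pU - pV) b ^ 2 - (lU - lV) ^ 2 \<le> 2 * I"
proof -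
  define E where "E = pU - pV"
  have "degree E \<le> r" unfolding E_def using degU degV degree_diff_le by blast
  with U V have intU: "(\<lambda>s. hU s * poly E s) integrable_on {a..b}"
    and intV: "(\<lambda>s. hV s * poly E s) integrable_on {a..b}"
    and eqU: "(poly pU a - lU) * poly E a + integral {a..b} (\<lambda>s. poly (pderiv pU) s * poly E s)
      = integral {a..b} (\<lambda>s. hU s * poly E s)"
    and eqV: "(poly pV a - lV) * poly E a + integral {a..b} (\<lambda>s. poly (pderiv pV) s * poly E s)
      = integral {a..b} (\<lambda>s. hV s * poly E s)"
    unfolding dG_weak_eq_def by auto
  define I where "I = integral {a..b} (\<lambda>s. hU s * poly E s) - integral {a..b} (\<lambda>s. hV s * poly E s)"
  have "((\<lambda>s. hU s * poly E s - hV s * poly E s) has_integral I) {a..b}"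
    unfolding I_def using intU intV by (intro has_integral_diff) (auto simp: has_integral_integral)
  then have int: "((\<lambda>s. (hU s - hV s) * poly E s) has_integral I) {a..b}"
    by (simp add: left_diff_distrib)
  have "integral {a..b} (\<lambda>s. poly (pderiv pU) s * poly E s)
      - integral {a..b} (\<lambda>s. poly (pderiv pV) s * poly E s)
      = integral {a..b} (\<lambda>s. poly (pderiv E) s * poly E s)"
    by (subst integral_diff[symmetric], (rule poly_mult_integrable)+)
      (simp add: E_def pderiv_diff algebra_simps)
  also have "\<dots> = (poly E b ^ 2 - poly E a ^ 2) / 2"
    using has_integral_pderiv_mult_self[OF ab] by (rule integral_unique)
  finally have "integral {a..b} (\<lambda>s. poly (pderiv pU) s * poly E s)
      - integral {a..b} (\<lambda>s. poly (pderiv pV) s * poly E s) = (poly E b ^ 2 - poly E a ^ 2) / 2" .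
  moreover have "(poly pU a - lU) * poly E a - (poly pV a - lV) * poly E a
      = (poly E a - (lU - lV)) * poly E a"
    by (simp add: E_def algebra_simps)
  ultimately have "(poly E a - (lU - lV)) * poly E a + (poly E b ^ 2 - poly E a ^ 2) / 2 = I"
    using eqU eqV unfolding I_def by linarith
  then have "2 * I = 2 * ((poly E a - (lU - lV)) * poly E a) + (poly E b ^ 2 - poly E a ^ 2)"
    by (simp add: field_simps)
  then have "poly E b ^ 2 - (lU - lV) ^ 2 = 2 * I - (poly E a - (lU - lV)) ^ 2"
    by (simp add: power2_eq_square algebra_simps)
  then have "poly E b ^ 2 - (lU - lV) ^ 2 \<le> 2 * I"
    by (smt (verit) zero_le_power2)
  with int show ?thesis using that unfolding E_def by blast
qed

lemma has_integral_telescope: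
  fixes a :: "nat \<Rightarrow> real" and g :: "real \<Rightarrow> 'a::banach"
  assumes mono: "\<And>j. j < k \<Longrightarrow> a j \<le> a (Suc j)"
    and int: "\<And>j. j < k \<Longrightarrow> (g has_integral I j) {a j..a (Suc j)}"
  shows "(g has_integral (\<Sum>j<k. I j)) {a 0..a k}"
proof -
  have "a 0 \<le> a k \<and> (g has_integral (\<Sum>j<k. I j)) {a 0..a k}"
    using mono int
  proof (induction k)
    case 0
    then show ?case by (simp add: has_integral_refl)
  next
    case (Suc k)
    then have le: "a 0 \<le> a k" "a k \<le> a (Suc k)"
      and int: "(g has_integral (\<Sum>j<k. I j)) {a 0..a k}" "(g has_integral I k) {a k..a (Suc k)}"
      by auto
    then show ?case using has_integral_combine[OF le int] by simp
  qed
  then show ?thesis ..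
qed

lemma sum_integral_nonpos:
  fixes F :: "'i \<Rightarrow> real \<Rightarrow> real"
  assumes "finite A" and int: "\<And>i. i \<in> A \<Longrightarrow> F i integrable_on {a..b}"
    and nonpos: "\<And>s. s \<in> {a<..b} \<Longrightarrow> (\<Sum>i\<in>A. F i s) \<le> 0"
  shows "(\<Sum>i\<in>A. integral {a..b} (F i)) \<le> 0"
proof -
  have "((\<lambda>s. \<Sum>i\<in>A. F i s) has_integral (\<Sum>i\<in>A. integral {a..b} (F i))) {a..b}"
    using assms(1) int by (intro has_integral_sum) auto
  then have "((\<lambda>s. if s = a then 0 else \<Sum>i\<in>A. F i s)
      has_integral (\<Sum>i\<in>A. integral {a..b} (F i))) {a..b}"
    by (rule has_integral_spike[OF negligible_sing, rotated]) auto
  then show ?thesis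
    by (rule has_integral_le[OF _ has_integral_0]) (use nonpos in auto)
qed

lemma mdG_component_energy:
  assumes part: "is_partition T (M i) (t i)"
    and U: "is_mdG f M t q U0 PU" and V: "is_mdG f M t q V0 PV"
    and k: "k \<le> M i"
  defines "g \<equiv> \<lambda>s. (f (dg_vec M t PU s) s - f (dg_vec M t PV s) s) $ i
    * (dg_vec M t PU s - dg_vec M t PV s) $ i"
  shows "g integrable_on {0..t i k}"
    and "(dg_node U0 t PU i k - dg_node V0 t PV i k) ^ 2 - (U0 $ i - V0 $ i) ^ 2
      \<le> 2 * integral {0..t i k} g"
proof -
  define D where "D j = dg_node U0 t PU i j - dg_node V0 t PV i j" for j
  have "\<exists>I. (g has_integral I) {t i j..t i (Suc j)} \<and> D (Suc j) ^ 2 - D j ^ 2 \<le> 2 * I"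
    if "j < k" for j
  proof -
    have jM: "j < M i" and j: "1 \<le> Suc j" "Suc j \<le> M i" using that k by auto
    have ab: "t i j \<le> t i (Suc j)" using is_partition_le[OF part, of j "Suc j"] j by simp
    from dG_weak_eq_energy[OF ab is_mdG_piece(2)[OF U jM] is_mdG_piece(2)[OF V jM]
        is_mdG_piece(1)[OF U jM] is_mdG_piece(1)[OF V jM]] obtain I
      where int: "((\<lambda>s. (f (dg_vec M t PU s) s $ i - f (dg_vec M t PV s) s $ i)
          * poly (PU i (Suc j) - PV i (Suc j)) s) has_integral I) {t i j..t i (Suc j)}"
        and est: "poly (PU i (Suc j) - PV i (Suc j)) (t i (Suc j)) ^ 2 - D j ^ 2 \<le> 2 * I"
      unfolding D_def by blast
    have "g s = (f (dg_vec M t PU s) s $ i - f (dg_vec M t PV s) s $ i)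
        * poly (PU i (Suc j) - PV i (Suc j)) s" if "s \<in> {t i j..t i (Suc j)} - {t i j}" for s
      using that dg_val_on_piece[OF part j, of s] by (simp add: g_def dg_vec_def)
    then have "(g has_integral I) {t i j..t i (Suc j)}"
      by (rule has_integral_spike[OF negligible_sing _ int])
    moreover have "D (Suc j) = poly (PU i (Suc j) - PV i (Suc j)) (t i (Suc j))"
      by (simp add: D_def dg_node_def)
    ultimately show ?thesis using est by auto
  qed
  then obtain I where int: "\<And>j. j < k \<Longrightarrow> (g has_integral I j) {t i j..t i (Suc j)}"
    and est: "\<And>j. j < k \<Longrightarrow> D (Suc j) ^ 2 - D j ^ 2 \<le> 2 * I j"
    by metis
  have "D k ^ 2 - D 0 ^ 2 = (\<Sum>j<k. D (Suc j) ^ 2 - D j ^ 2)"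
    by (rule sum_lessThan_telescope[symmetric])
  also have "\<dots> \<le> 2 * (\<Sum>j<k. I j)"
    unfolding sum_distrib_left by (intro sum_mono est) simp
  finally have "D k ^ 2 - D 0 ^ 2 \<le> 2 * (\<Sum>j<k. I j)" .
  moreover have "D 0 = U0 $ i - V0 $ i" by (simp add: D_def dg_node_def)
  ultimately have energy: "D k ^ 2 - (U0 $ i - V0 $ i) ^ 2 \<le> 2 * (\<Sum>j<k. I j)" by simp
  have "(g has_integral (\<Sum>j<k. I j)) {t i 0..t i k}"
    using k by (intro has_integral_telescope int is_partition_le[OF part]) auto
  moreover have "t i 0 = 0" using part unfolding is_partition_def by simp
  ultimately have int_k: "(g has_integral (\<Sum>j<k. I j)) {0..t i k}" by simp
  show "g integrable_on {0..t i k}" using int_k by (rule has_integral_integrable)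
  show "(dg_node U0 t PU i k - dg_node V0 t PV i k) ^ 2 - (U0 $ i - V0 $ i) ^ 2
      \<le> 2 * integral {0..t i k} g"
    using energy unfolding integral_unique[OF int_k] D_def .
qed

lemma norm_vec_squared: "norm (x :: real ^ 'n) ^ 2 = (\<Sum>i\<in>UNIV. (x $ i) ^ 2)"
  unfolding power2_norm_eq_inner inner_vec_def by (simp add: power2_eq_square)

theorem theorem5p2:
  fixes f :: "real ^ 'n \<Rightarrow> real \<Rightarrow> real ^ 'n"
    and T :: real and M :: "'n \<Rightarrow> nat" and t :: "'n \<Rightarrow> nat \<Rightarrow> real"
    and q :: "'n \<Rightarrow> nat \<Rightarrow> nat"
    and U0 V0 :: "real ^ 'n" and PU PV :: "'n \<Rightarrow> nat \<Rightarrow> real poly"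
    and tbar :: real
  assumes T_pos: "0 < T"
    and part: "\<And>i. is_partition T (M i) (t i)"
    and mono: "\<And>u v s. s \<in> {0<..T} \<Longrightarrow> (f u s - f v s) \<bullet> (u - v) \<le> 0"
    and U: "is_mdG f M t q U0 PU"
    and V: "is_mdG f M t q V0 PV"
    and tbar: "tbar \<in> {0<..T}"
    and sync: "\<And>i. \<exists>k \<le> M i. t i k = tbar"
  shows "norm (dg_vec M t PU tbar - dg_vec M t PV tbar) \<le> norm (U0 - V0)"
proof -
  define g where "g i = (\<lambda>s. (f (dg_vec M t PU s) s - f (dg_vec M t PV s) s) $ i
    * (dg_vec M t PU s - dg_vec M t PV s) $ i)" for i
  obtain k where k: "\<And>i. k i \<le> M i" "\<And>i. t i (k i) = tbar" using sync by metis
  have node_tbar: "dg_vec M t P tbar $ i = dg_node W t P i (k i)" for P W i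
    using dg_vec_at_node[where M = M and t = t and i = i, OF part k(1)] k(2)[of i] tbar by simp
  have int: "g i integrable_on {0..tbar}"
    and est: "((dg_vec M t PU tbar - dg_vec M t PV tbar) $ i) ^ 2 - ((U0 - V0) $ i) ^ 2
      \<le> 2 * integral {0..tbar} (g i)" for i
    using mdG_component_energy[where M = M and t = t and i = i, OF part U V k(1)]
    by (simp_all add: g_def k(2)
        node_tbar[where P = PU and W = U0] node_tbar[where P = PV and W = V0])
  have "(\<Sum>i\<in>UNIV. g i s)
      = (f (dg_vec M t PU s) s - f (dg_vec M t PV s) s) \<bullet> (dg_vec M t PU s - dg_vec M t PV s)" for s
    unfolding g_def inner_vec_def by simp
  then have "(\<Sum>i\<in>UNIV. integral {0..tbar} (g i)) \<le> 0"
    using int mono tbar by (intro sum_integral_nonpos) auto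
  moreover have "norm (dg_vec M t PU tbar - dg_vec M t PV tbar) ^ 2 - norm (U0 - V0) ^ 2
      \<le> 2 * (\<Sum>i\<in>UNIV. integral {0..tbar} (g i))"
    unfolding norm_vec_squared sum_subtractf[symmetric] sum_distrib_left by (intro sum_mono est)
  ultimately have "norm (dg_vec M t PU tbar - dg_vec M t PV tbar) ^ 2 \<le> norm (U0 - V0) ^ 2"
    by linarith
  then show ?thesis by (rule power2_le_imp_le) simp
qed

end
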